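(* Let $R$ be a hyperring. If $R/nil(R)$ has an idempotent different from its zero and identity elements, then $R$ has an idempotent $e$ with $e\notin\{0,1\}$.
   Context: Standing conventions. A hyperring means a commutative Krasner hyperring with identity: a set $R$ with a hyperoperation $+:R\times R\to\mathcal P^*(R)$ (nonempty subsets; for subsets $A,B$ one sets $A+B=\bigcup_{a\in A,b\in B}a+b$) and a binary operation $\cdot$ such that: $+$ is associative and commutative; there is $0\in R$ with $0+x=\{x\}$ for all $x$; every $x$ has a unique $-x$ with $0\in x+(-x)$; $z\in x+y$ implies $y\in -x+z$ and $x\in z-y$; $(R,\cdot)$ is a commutative monoid with identity $1$; $0\cdot x=0$; and $x(y+z)=xy+xz$. A hyperideal of $R$ is a nonempty $I\subseteq R$ with $a-b\subseteq I$ and $ra\in I$ for all $a,b\in I$, $r\in R$. $nil(R)=\{x\in R: x^n=0\text{ for some }n\in\mathbb N\}$ (a hyperideal). For a hyperideal $I$, the quotient hyperring $R/I=\{x+I:x\in R\}$ has operations $(x+I)+(y+I)=\{z+I: z\in x+y\}$ and $(x+I)(y+I)=xy+I$, zero $I$ and identity $1+I$. *)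

theory Defs
  imports Main
begin

text \<open>A commutative Krasner hyperring with identity, given by a carrier R,
 a hyperaddition add, a multiplication mul, zero z and identity u.\<close>

definition setadd :: "('a \<Rightarrow> 'a \<Rightarrow> 'a set) \<Rightarrow> 'a set \<Rightarrow> 'a set \<Rightarrow> 'a set" where
  "setadd add A B = (\<Union>a\<in>A. \<Union>b\<in>B. add a b)"

definition hneg :: "'a set \<Rightarrow> ('a \<Rightarrow> 'a \<Rightarrow> 'a set) \<Rightarrow> 'a \<Rightarrow> 'a \<Rightarrow> 'a" where
  "hneg R add z x = (THE y. y \<in> R \<and> z \<in> add x y)"

definition hyperring ::
  "'a set \<Rightarrow> ('a \<Rightarrow> 'a \<Rightarrow> 'a set) \<Rightarrow> ('a \<Rightarrow> 'a \<Rightarrow> 'a) \<Rightarrow> 'a \<Rightarrow> 'a \<Rightarrow> bool" where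
  "hyperring R add mul z u \<longleftrightarrow>
     (\<forall>x\<in>R. \<forall>y\<in>R. add x y \<noteq> {} \<and> add x y \<subseteq> R) \<and>
     (\<forall>x\<in>R. \<forall>y\<in>R. \<forall>w\<in>R. setadd add (add x y) {w} = setadd add {x} (add y w)) \<and>
     (\<forall>x\<in>R. \<forall>y\<in>R. add x y = add y x) \<and>
     z \<in> R \<and> (\<forall>x\<in>R. add z x = {x}) \<and>
     (\<forall>x\<in>R. \<exists>!y. y \<in> R \<and> z \<in> add x y) \<and>
     (\<forall>x\<in>R. \<forall>y\<in>R. \<forall>w\<in>R. w \<in> add x y \<longrightarrow>
        y \<in> add (hneg R add z x) w \<and> x \<in> add w (hneg R add z y)) \<and>
     (\<forall>x\<in>R. \<forall>y\<in>R. mul x y \<in> R) \<and>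
     (\<forall>x\<in>R. \<forall>y\<in>R. \<forall>w\<in>R. mul (mul x y) w = mul x (mul y w)) \<and>
     (\<forall>x\<in>R. \<forall>y\<in>R. mul x y = mul y x) \<and>
     u \<in> R \<and> (\<forall>x\<in>R. mul u x = x) \<and>
     (\<forall>x\<in>R. mul z x = z) \<and>
     (\<forall>x\<in>R. \<forall>y\<in>R. \<forall>w\<in>R. mul x ` add y w = setadd add {mul x y} {mul x w})"

definition hnil :: "'a set \<Rightarrow> ('a \<Rightarrow> 'a \<Rightarrow> 'a) \<Rightarrow> 'a \<Rightarrow> 'a \<Rightarrow> 'a set" where
  "hnil R mul z u = {x \<in> R. \<exists>n::nat. n \<ge> 1 \<and> (mul x ^^ n) u = z}"

definition hcoset :: "('a \<Rightarrow> 'a \<Rightarrow> 'a set) \<Rightarrow> 'a set \<Rightarrow> 'a \<Rightarrow> 'a set" where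
  "hcoset add I x = setadd add {x} I"

text \<open>Carrier and multiplication of the quotient hyperring R/I:
 (x+I)(y+I) = xy + I.\<close>
definition quot_carrier :: "'a set \<Rightarrow> ('a \<Rightarrow> 'a \<Rightarrow> 'a set) \<Rightarrow> 'a set \<Rightarrow> 'a set set" where
  "quot_carrier R add I = hcoset add I ` R"

definition quot_mult :: "'a set \<Rightarrow> ('a \<Rightarrow> 'a \<Rightarrow> 'a set) \<Rightarrow> ('a \<Rightarrow> 'a \<Rightarrow> 'a) \<Rightarrow> 'a set
    \<Rightarrow> 'a set \<Rightarrow> 'a set \<Rightarrow> 'a set" where
  "quot_mult R add mul I X Y =
     (THE C. \<forall>x\<in>R. \<forall>y\<in>R. X = hcoset add I x \<and> Y = hcoset add I y \<longrightarrow> C = hcoset add I (mul x y))"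

end

theory Submission
  imports Defs
begin

text \<open>Let x be idempotent modulo nil(R), so x^2 \<in> x + a with a nilpotent. Then 1 \<in> x + b for
 some b with xb nilpotent, say (xb)^N = 0 with N a power of 2. In a hyperring,
 y \<in> s + t implies y^N \<in> s^N + tw for some w, because squaring y \<in> s + t gives
 y^2 \<in> s^2 + t(s + y). Applying this twice yields 1 \<in> f + e with e a multiple of x^N
 and f a power of a multiple of b, so ef = 0 and hence e = e^2. If e were 0 then
 1 = f and x would be nilpotent; if e were 1 then b would be nilpotent and x + nil(R)
 would be the identity coset.\<close>

locale comm_hyperring =
  fixes R :: "'a set" and add :: "'a \<Rightarrow> 'a \<Rightarrow> 'a set" and mul :: "'a \<Rightarrow> 'a \<Rightarrow> 'a"
    and z u :: 'a
  assumes hyperring: "hyperring R add mul z u"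
begin

abbreviation neg :: "'a \<Rightarrow> 'a" where "neg x \<equiv> hneg R add z x"
abbreviation pow :: "'a \<Rightarrow> nat \<Rightarrow> 'a" where "pow x n \<equiv> (mul x ^^ n) u"
abbreviation nilrad :: "'a set" where "nilrad \<equiv> hnil R mul z u"
abbreviation coset :: "'a set \<Rightarrow> 'a \<Rightarrow> 'a set" where "coset J x \<equiv> hcoset add J x"

lemma add_closed: "x \<in> R \<Longrightarrow> y \<in> R \<Longrightarrow> add x y \<subseteq> R"
  using hyperring unfolding hyperring_def by (elim conjE) meson

lemma add_assoc_set:
  "x \<in> R \<Longrightarrow> y \<in> R \<Longrightarrow> w \<in> R \<Longrightarrow> setadd add (add x y) {w} = setadd add {x} (add y w)"
  using hyperring unfolding hyperring_def by (elim conjE) meson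

lemma add_commute: "x \<in> R \<Longrightarrow> y \<in> R \<Longrightarrow> add x y = add y x"
  using hyperring unfolding hyperring_def by (elim conjE) meson

lemma zero_closed: "z \<in> R"
  using hyperring unfolding hyperring_def by (elim conjE) meson

lemma add_zero_left: "x \<in> R \<Longrightarrow> add z x = {x}"
  using hyperring unfolding hyperring_def by (elim conjE) meson

lemma neg_unique_exists: "x \<in> R \<Longrightarrow> \<exists>!y. y \<in> R \<and> z \<in> add x y"
  using hyperring unfolding hyperring_def by (elim conjE) (rule bspec)

lemma add_reversible:
  "x \<in> R \<Longrightarrow> y \<in> R \<Longrightarrow> w \<in> R \<Longrightarrow> w \<in> add x y \<Longrightarrow> y \<in> add (neg x) w \<and> x \<in> add w (neg y)"
  using hyperring unfolding hyperring_def by (elim conjE) meson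

lemma mul_closed: "x \<in> R \<Longrightarrow> y \<in> R \<Longrightarrow> mul x y \<in> R"
  using hyperring unfolding hyperring_def by (elim conjE) meson

lemma mul_assoc: "x \<in> R \<Longrightarrow> y \<in> R \<Longrightarrow> w \<in> R \<Longrightarrow> mul (mul x y) w = mul x (mul y w)"
  using hyperring unfolding hyperring_def by (elim conjE) meson

lemma mul_commute: "x \<in> R \<Longrightarrow> y \<in> R \<Longrightarrow> mul x y = mul y x"
  using hyperring unfolding hyperring_def by (elim conjE) meson

lemma one_closed: "u \<in> R"
  using hyperring unfolding hyperring_def by (elim conjE) meson

lemma mul_one_left: "x \<in> R \<Longrightarrow> mul u x = x"
  using hyperring unfolding hyperring_def by (elim conjE) meson

lemma mul_zero_left: "x \<in> R \<Longrightarrow> mul z x = z"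
  using hyperring unfolding hyperring_def by (elim conjE) meson

lemma mem_setadd: "v \<in> setadd add A B \<longleftrightarrow> (\<exists>a\<in>A. \<exists>b\<in>B. v \<in> add a b)"
  unfolding setadd_def by blast

lemma distrib: "x \<in> R \<Longrightarrow> y \<in> R \<Longrightarrow> w \<in> R \<Longrightarrow> mul x ` add y w = add (mul x y) (mul x w)"
  using hyperring unfolding hyperring_def by (simp add: setadd_def)

lemma mul_one_right: "x \<in> R \<Longrightarrow> mul x u = x"
  using mul_one_left mul_commute one_closed by metis

lemma mul_zero_right: "x \<in> R \<Longrightarrow> mul x z = z"
  using mul_zero_left mul_commute zero_closed by metis

lemma add_zero_right: "x \<in> R \<Longrightarrow> add x z = {x}"
  using add_zero_left add_commute zero_closed by metis

lemma mul_mul_swap: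
  "a \<in> R \<Longrightarrow> b \<in> R \<Longrightarrow> c \<in> R \<Longrightarrow> d \<in> R \<Longrightarrow> mul (mul a b) (mul c d) = mul (mul a c) (mul b d)"
  by (metis mul_assoc mul_commute mul_closed)

lemma mem_add_assoc:
  assumes "x \<in> R" "y \<in> R" "w \<in> R" "p \<in> add x y" "v \<in> add p w"
  shows "\<exists>q\<in>add y w. v \<in> add x q"
proof -
  have "v \<in> setadd add (add x y) {w}" using assms(4,5) by (auto simp: mem_setadd)
  then have "v \<in> setadd add {x} (add y w)" using add_assoc_set assms(1-3) by simp
  then show ?thesis by (auto simp: mem_setadd)
qed

lemma neg_closed: "x \<in> R \<Longrightarrow> neg x \<in> R"
  and zero_mem_add_neg: "x \<in> R \<Longrightarrow> z \<in> add x (neg x)"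
  unfolding hneg_def using theI'[OF neg_unique_exists] by blast+

lemma neg_unique: "x \<in> R \<Longrightarrow> y \<in> R \<Longrightarrow> z \<in> add x y \<Longrightarrow> y = neg x"
  using neg_closed zero_mem_add_neg neg_unique_exists by metis

lemma neg_neg: "x \<in> R \<Longrightarrow> neg (neg x) = x"
  by (metis neg_closed zero_mem_add_neg neg_unique add_commute)

lemma mul_neg_right: assumes "x \<in> R" "y \<in> R" shows "mul x (neg y) = neg (mul x y)"
proof -
  have "mul x z \<in> mul x ` add y (neg y)" using zero_mem_add_neg assms by blast
  then have "z \<in> add (mul x y) (mul x (neg y))"
    using distrib assms mul_zero_right neg_closed by simp
  then show ?thesis using neg_unique assms mul_closed neg_closed by blast
qed

lemma mul_neg_neg: assumes "x \<in> R" shows "mul (neg x) (neg x) = mul x x"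
  using assms mul_neg_right[of x "neg x"] mul_neg_right[of "neg x" x] mul_neg_right[of x x]
  by (simp add: neg_closed mul_commute neg_neg mul_closed)

lemma pow_closed: "x \<in> R \<Longrightarrow> pow x n \<in> R"
  by (induction n) (auto simp: one_closed mul_closed)

lemma pow_one: "pow u n = u"
  by (induction n) (simp_all add: mul_one_left one_closed)

lemma pow_add: "x \<in> R \<Longrightarrow> pow x (m + n) = mul (pow x m) (pow x n)"
  by (induction m) (auto simp: mul_one_left pow_closed mul_assoc)

lemma pow_mul: "x \<in> R \<Longrightarrow> y \<in> R \<Longrightarrow> pow (mul x y) n = mul (pow x n) (pow y n)"
  by (induction n) (auto simp: mul_one_left one_closed mul_mul_swap pow_closed)

lemma pow_pow: "x \<in> R \<Longrightarrow> pow (pow x m) n = pow x (m * n)"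
  by (induction n) (simp_all add: pow_add)

lemma pow_eq_zero_mono: assumes "x \<in> R" "pow x n = z" "n \<le> m" shows "pow x m = z"
  using pow_add[OF assms(1), of n "m - n"] assms by (simp add: mul_zero_left pow_closed)

lemma mem_add_square:
  assumes "y \<in> R" "s \<in> R" "t \<in> R" "y \<in> add s t"
  shows "\<exists>w\<in>R. mul y y \<in> add (mul s s) (mul t w)"
proof -
  have "mul y y \<in> mul y ` add s t" using assms by blast
  then have yy: "mul y y \<in> add (mul y s) (mul y t)" using distrib assms by simp
  have "mul s y \<in> mul s ` add s t" using assms by blast
  then have ys: "mul y s \<in> add (mul s s) (mul s t)" using distrib assms mul_commute by simp
  obtain q where q: "q \<in> add (mul s t) (mul y t)" "mul y y \<in> add (mul s s) q"
    using mem_add_assoc[OF _ _ _ ys yy] mul_closed assms by blast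
  have "add (mul s t) (mul y t) = mul t ` add s y"
    using distrib mul_commute assms by simp
  with q obtain w where "w \<in> add s y" "mul y y \<in> add (mul s s) (mul t w)" by auto
  then show ?thesis using add_closed assms by blast
qed

lemma mem_add_pow2:
  assumes "y \<in> R" "s \<in> R" "t \<in> R" "y \<in> add s t"
  shows "\<exists>w\<in>R. pow y (2^k) \<in> add (pow s (2^k)) (mul t w)"
proof (induction k)
  case 0
  show ?case using assms one_closed by (intro bexI[of _ u]) (auto simp: mul_one_right)
next
  case (Suc k)
  then obtain w where w: "w \<in> R" "pow y (2^k) \<in> add (pow s (2^k)) (mul t w)" by blast
  then obtain w' where w': "w' \<in> R"
    "mul (pow y (2^k)) (pow y (2^k)) \<in> add (mul (pow s (2^k)) (pow s (2^k))) (mul (mul t w) w')"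
    using mem_add_square[OF pow_closed pow_closed mul_closed w(2)] assms by blast
  have two: "(2::nat)^Suc k = 2^k + 2^k" by simp
  have "pow y (2^Suc k) \<in> add (pow s (2^Suc k)) (mul t (mul w w'))"
    using w' unfolding two pow_add[OF assms(1)] pow_add[OF assms(2)] using mul_assoc assms w(1) by simp
  then show ?case using mul_closed w w'(1) by blast
qed

subsection \<open>Hyperideals and cosets\<close>

text \<open>For nonempty J, closure under addition and negatives is the usual a - b \<subseteq> J.\<close>

definition hyperideal :: "'a set \<Rightarrow> bool" where
  "hyperideal J \<longleftrightarrow> J \<subseteq> R \<and> z \<in> J \<and> (\<forall>a\<in>J. \<forall>c\<in>J. add a c \<subseteq> J) \<and> (\<forall>a\<in>J. neg a \<in> J) \<and>
     (\<forall>a\<in>J. \<forall>r\<in>R. mul r a \<in> J)"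

lemma mem_coset: "v \<in> coset J x \<longleftrightarrow> (\<exists>a\<in>J. v \<in> add x a)"
  unfolding hcoset_def mem_setadd by simp

context
  fixes J assumes J: "hyperideal J"
begin

lemma hyperideal_subset: "J \<subseteq> R"
  and zero_mem_hyperideal: "z \<in> J"
  and hyperideal_add: "a \<in> J \<Longrightarrow> c \<in> J \<Longrightarrow> add a c \<subseteq> J"
  and hyperideal_neg: "a \<in> J \<Longrightarrow> neg a \<in> J"
  and hyperideal_mul: "a \<in> J \<Longrightarrow> r \<in> R \<Longrightarrow> mul r a \<in> J"
  using J unfolding hyperideal_def by blast+

lemma mem_coset_self: "x \<in> R \<Longrightarrow> x \<in> coset J x"
  using mem_coset zero_mem_hyperideal add_zero_right by blast

lemma coset_subset:
  assumes "x \<in> R" "y \<in> coset J x" shows "coset J y \<subseteq> coset J x"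
proof
  fix v assume "v \<in> coset J y"
  then obtain c where c: "c \<in> J" "v \<in> add y c" using mem_coset by blast
  obtain a where a: "a \<in> J" "y \<in> add x a" using assms mem_coset by blast
  obtain q where "q \<in> add a c" "v \<in> add x q"
    using mem_add_assoc[OF assms(1) _ _ a(2) c(2)] a c hyperideal_subset by blast
  then show "v \<in> coset J x" using hyperideal_add a c mem_coset by blast
qed

lemma mem_coset_sym: assumes "x \<in> R" "y \<in> coset J x" shows "x \<in> coset J y"
proof -
  obtain a where a: "a \<in> J" "y \<in> add x a" using assms mem_coset by blast
  then have "y \<in> R" using add_closed assms hyperideal_subset by blast
  then have "x \<in> add y (neg a)" using add_reversible[OF assms(1) _ _ a(2)] a hyperideal_subset by blast
  then show ?thesis using hyperideal_neg a mem_coset by blast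
qed

lemma coset_eq: assumes "x \<in> R" "y \<in> coset J x" shows "coset J y = coset J x"
proof -
  have "y \<in> R" using assms mem_coset add_closed hyperideal_subset by blast
  then show ?thesis
    using coset_subset[OF assms] coset_subset[OF _ mem_coset_sym] assms by blast
qed

lemma coset_eq_iff: "x \<in> R \<Longrightarrow> y \<in> R \<Longrightarrow> coset J x = coset J y \<longleftrightarrow> y \<in> coset J x"
  using coset_eq mem_coset_self by metis

lemma coset_zero: "coset J z = J"
proof -
  have "add z a = {a}" if "a \<in> J" for a using that hyperideal_subset add_zero_left by blast
  then show ?thesis unfolding set_eq_iff mem_coset by auto
qed

lemma coset_mul_cong:
  assumes "x \<in> R" "x' \<in> R" "y \<in> R" "coset J x = coset J x'"
  shows "coset J (mul x y) = coset J (mul x' y)"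
proof -
  obtain a where a: "a \<in> J" "x' \<in> add x a" using assms coset_eq_iff mem_coset by blast
  then have "mul y x' \<in> add (mul y x) (mul y a)" using distrib assms hyperideal_subset by blast
  then have "mul x' y \<in> coset J (mul x y)"
    using mul_commute hyperideal_mul a assms mem_coset by metis
  then show ?thesis using coset_eq mul_closed assms by metis
qed

lemma quot_mult_coset:
  assumes "x \<in> R" "y \<in> R"
  shows "quot_mult R add mul J (coset J x) (coset J y) = coset J (mul x y)"
  unfolding quot_mult_def
proof (rule the_equality)
  show "\<forall>x'\<in>R. \<forall>y'\<in>R. coset J x = coset J x' \<and> coset J y = coset J y' \<longrightarrow>
      coset J (mul x y) = coset J (mul x' y')"
    using coset_mul_cong mul_commute assms by (metis mul_closed)
qed (use assms in blast)

end

lemma mem_nilrad: "x \<in> nilrad \<longleftrightarrow> x \<in> R \<and> (\<exists>n\<ge>1. pow x n = z)"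
  unfolding hnil_def by simp

lemma nilrad_neg: assumes "a \<in> nilrad" shows "neg a \<in> nilrad"
proof -
  obtain n where n: "n \<ge> 1" "pow a n = z" and a: "a \<in> R" using assms mem_nilrad by blast
  have "pow (neg a) (n + n) = pow (mul a a) n"
    using pow_add pow_mul mul_neg_neg neg_closed a by metis
  also have "\<dots> = z" using pow_mul a n mul_zero_left zero_closed by simp
  finally show ?thesis using mem_nilrad neg_closed a n by (metis le_add2 order_trans)
qed

lemma nilrad_add: assumes "a \<in> nilrad" "c \<in> nilrad" "d \<in> add a c" shows "d \<in> nilrad"
proof -
  obtain m where m: "pow a m = z" and a: "a \<in> R" using assms mem_nilrad by blast
  obtain n where n: "pow c n = z" and c: "c \<in> R" using assms mem_nilrad by blast
  have d: "d \<in> R" using add_closed a c assms by blast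
  obtain w where w: "w \<in> R" "pow d (2^m) \<in> add (pow a (2^m)) (mul c w)"
    using mem_add_pow2[OF d a c assms(3)] by blast
  have "pow a (2^m) = z" using pow_eq_zero_mono[OF a m] by (simp add: less_imp_le)
  then have "pow d (2^m) = mul c w" using w add_zero_left mul_closed c by simp
  then have "pow d (2^m * 2^n) = pow (mul c w) (2^n)"
    using pow_pow[OF d, where m = "2^m" and n = "2^n"] by simp
  also have "\<dots> = mul (pow c (2^n)) (pow w (2^n))" using pow_mul c w(1) by blast
  also have "pow c (2^n) = z" using pow_eq_zero_mono[OF c n] by (simp add: less_imp_le)
  finally have "pow d (2^m * 2^n) = z" using mul_zero_left pow_closed w(1) by simp
  moreover have "(1::nat) \<le> 2^m * 2^n" by simp
  ultimately show ?thesis using mem_nilrad d by blast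
qed

lemma hyperideal_nilrad: "hyperideal nilrad"
  unfolding hyperideal_def
proof (intro conjI ballI subsetI)
  show "z \<in> nilrad" using mem_nilrad zero_closed mul_one_right by fastforce
  show "mul r a \<in> nilrad" if "a \<in> nilrad" "r \<in> R" for a r
    using that pow_mul[of r a] mem_nilrad mul_closed mul_zero_right pow_closed by metis
qed (use mem_nilrad nilrad_neg nilrad_add in blast)+

subsection \<open>Lifting idempotents\<close>

lemma one_mem_add_complement:
  assumes x: "x \<in> R" and a: "a \<in> R" and xx: "mul x x \<in> add x a"
  obtains b where "b \<in> R" "u \<in> add x b" "mul x b = neg a"
proof -
  have xx_closed: "mul x x \<in> R" using mul_closed x by blast
  have "x \<in> add (mul x x) (neg a)" using add_reversible[OF x a xx_closed xx] by blast
  then have "neg a \<in> add (neg (mul x x)) x"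
    using add_reversible[OF xx_closed neg_closed[OF a] x] by blast
  also have "add (neg (mul x x)) x = add (mul x u) (mul x (neg x))"
    using add_commute[OF neg_closed[OF xx_closed] x] mul_neg_right[OF x x] mul_one_right[OF x] by simp
  also have "\<dots> = mul x ` add u (neg x)" using distrib[OF x one_closed neg_closed[OF x]] by simp
  finally obtain b where b: "b \<in> add u (neg x)" "mul x b = neg a" by (metis imageE)
  have b_closed: "b \<in> R" using b(1) add_closed one_closed neg_closed x by blast
  have "u \<in> add b (neg (neg x))" using add_reversible[OF one_closed neg_closed[OF x] b_closed b(1)] by blast
  then have "u \<in> add x b" using neg_neg[OF x] add_commute[OF x b_closed] by simp
  then show thesis using that b_closed b(2) by blast
qed

lemma idempotent_of_orthogonal_sum:
  assumes "e \<in> R" "f \<in> R" "u \<in> add f e" "mul e f = z"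
  shows "mul e e = e"
proof -
  have "mul e u \<in> mul e ` add f e" using assms by blast
  then have "e \<in> add z (mul e e)" using distrib assms mul_one_right by simp
  then show ?thesis using add_zero_left mul_closed assms by simp
qed

lemma lift_idempotent:
  assumes x: "x \<in> R" and b: "b \<in> R" and "u \<in> add x b" and c: "mul x b \<in> nilrad"
  obtains e where "e \<in> R" "mul e e = e" "e = z \<Longrightarrow> x \<in> nilrad" "e = u \<Longrightarrow> b \<in> nilrad"
proof -
  obtain n where n: "pow (mul x b) n = z" using c mem_nilrad by blast
  define N :: nat where "N = 2^n"
  have cN: "pow (mul x b) N = z"
    using pow_eq_zero_mono[OF mul_closed[OF x b] n] N_def by (simp add: less_imp_le)
  have N: "N = Suc (N - 1)" using N_def by simp
  obtain w where w: "w \<in> R" "u \<in> add (pow x N) (mul b w)"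
    using mem_add_pow2[OF one_closed x b \<open>u \<in> add x b\<close>, of n] N_def by (auto simp: pow_one)
  define s where "s = pow x N"
  define t where "t = mul b w"
  have s: "s \<in> R" and t: "t \<in> R" using s_def t_def pow_closed mul_closed x b w(1) by auto
  have "u \<in> add t s" using w(2) s_def t_def add_commute[OF s t] by simp
  then obtain w' where w': "w' \<in> R" "u \<in> add (pow t N) (mul s w')"
    using mem_add_pow2[OF one_closed t s, of n] N_def by (auto simp: pow_one)
  define e where "e = mul s w'"
  have e: "e \<in> R" using e_def mul_closed s w'(1) by blast
  have "mul e (pow t N) = mul (mul s (pow b N)) (mul w' (pow w N))"
    unfolding e_def t_def using pow_mul[OF b w(1)] mul_mul_swap s w'(1) pow_closed b w(1) by simp
  also have "mul s (pow b N) = z" unfolding s_def using pow_mul[OF x b] cN by simp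
  finally have "mul e (pow t N) = z" using mul_zero_left mul_closed w'(1) pow_closed w(1) by simp
  then have ee: "mul e e = e"
    using idempotent_of_orthogonal_sum[OF e pow_closed[OF t]] w'(2) e_def by blast
  have pt: "pow t (N - 1) \<in> R" and px: "pow x (N - 1) \<in> R" using pow_closed t x by auto
  have "x \<in> nilrad" if "e = z"
  proof -
    have "u = pow t N" using that w'(2) e_def add_zero_right pow_closed[OF t] by simp
    then have "x = mul x (mul (mul b w) (pow t (N - 1)))"
      using mul_one_right[OF x] t_def by (subst (asm) N) simp
    also have "\<dots> = mul (mul x b) (mul w (pow t (N - 1)))"
      using mul_assoc x b w(1) pt mul_closed by simp
    also have "\<dots> = mul (mul w (pow t (N - 1))) (mul x b)"
      using mul_commute mul_closed x b w(1) pt by simp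
    finally show ?thesis using hyperideal_mul[OF hyperideal_nilrad c mul_closed[OF w(1) pt]] by metis
  qed
  moreover have "b \<in> nilrad" if "e = u"
  proof -
    have "b = mul b (mul (mul x (pow x (N - 1))) w')"
      using that mul_one_right[OF b] e_def s_def by (subst (asm) N) simp
    also have "\<dots> = mul (mul b x) (mul (pow x (N - 1)) w')"
      using mul_assoc x b w'(1) px mul_closed by simp
    also have "\<dots> = mul (mul (pow x (N - 1)) w') (mul x b)"
      using mul_commute mul_closed x b w'(1) px by simp
    finally show ?thesis using hyperideal_mul[OF hyperideal_nilrad c mul_closed[OF px w'(1)]] by metis
  qed
  ultimately show thesis using that e ee by blast
qed

end

theorem mainTheorem6:
  fixes R :: "'a set" and add :: "'a \<Rightarrow> 'a \<Rightarrow> 'a set" and mul :: "'a \<Rightarrow> 'a \<Rightarrow> 'a"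
    and z u :: 'a
  assumes "hyperring R add mul z u"
    and "\<exists>X\<in>quot_carrier R add (hnil R mul z u).
           quot_mult R add mul (hnil R mul z u) X X = X \<and>
           X \<noteq> hnil R mul z u \<and>
           X \<noteq> hcoset add (hnil R mul z u) u"
  shows "\<exists>e\<in>R. mul e e = e \<and> e \<noteq> z \<and> e \<noteq> u"
proof -
  interpret comm_hyperring R add mul z u using assms(1) by (rule comm_hyperring.intro)
  note I = hyperideal_nilrad
  obtain x where x: "x \<in> R" and idem: "quot_mult R add mul nilrad (coset nilrad x) (coset nilrad x) = coset nilrad x"
    and not_zero: "coset nilrad x \<noteq> nilrad" and not_one: "coset nilrad x \<noteq> coset nilrad u"
    using assms(2) unfolding quot_carrier_def by blast
  have "mul x x \<in> coset nilrad x"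
    using idem quot_mult_coset[OF I x x] coset_eq_iff[OF I x] mul_closed x by metis
  then obtain a where a: "a \<in> nilrad" "mul x x \<in> add x a" using mem_coset by blast
  then obtain b where b: "b \<in> R" "u \<in> add x b" "mul x b = neg a"
    using one_mem_add_complement x hyperideal_subset[OF I] by blast
  then obtain e where "e \<in> R" "mul e e = e" "e = z \<Longrightarrow> x \<in> nilrad" "e = u \<Longrightarrow> b \<in> nilrad"
    using lift_idempotent x nilrad_neg a by metis
  moreover have "x \<notin> nilrad"
    using not_zero coset_eq[OF I zero_closed] coset_zero[OF I] add_zero_left x mem_coset by metis
  moreover have "b \<notin> nilrad"
    using not_one coset_eq_iff[OF I x one_closed] mem_coset b by blast
  ultimately show ?thesis by blast
qed

end
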